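(* Let $s,d\ge1$ with $s\le 2^d$, and let $\mathbf{z}^0,\ldots,\mathbf{z}^{s-1}\in\{0,1\}^d$ be pairwise distinct. Then there is a two-layer Boolean threshold network with $s$ input nodes and $d$ output nodes that maps $\mathbf{h}^i[s]$ to $\mathbf{z}^i$ for every $i=0,\ldots,s-1$.
   Context: For integers $0\le i<s$, the step vector $\mathbf{h}^i[s]\in\{0,1\}^s$ has $\mathbf{h}^i[s]_j=1$ for $0\le j\le i$ and $0$ for $i<j<s$. A two-layer Boolean threshold network with $s$ inputs and $d$ outputs computes a map $\{0,1\}^s\to\{0,1\}^d$ each of whose coordinates is of the form $\mathbf{u}\mapsto[\mathbf{w}\cdot\mathbf{u}\ge\theta]$ (value $1$ iff $\mathbf{w}\cdot\mathbf{u}\ge\theta$) with $\mathbf{w}\in\mathbb{Z}^s$, $\theta\in\mathbb{Z}$. *)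

theory Defs
  imports Main
begin

text \<open>Vectors in {0,1}^n are represented as functions nat => int, only the
 coordinates below n being relevant.\<close>

definition step_vec :: "nat \<Rightarrow> nat \<Rightarrow> nat \<Rightarrow> int" where
  "step_vec s i = (\<lambda>j. if j \<le> i \<and> j < s then 1 else 0)"

definition threshold_net :: "nat \<Rightarrow> (nat \<Rightarrow> nat \<Rightarrow> int) \<Rightarrow> (nat \<Rightarrow> int) \<Rightarrow> (nat \<Rightarrow> int) \<Rightarrow> nat \<Rightarrow> int" where
  "threshold_net s W theta u = (\<lambda>k. if (\<Sum>j<s. W k j * u j) \<ge> theta k then 1 else 0)"

end

theory Submission
  imports Defs
begin

text \<open>Give output k the weights z(0,k), z(1,k) - z(0,k), ..., z(s-1,k) - z(s-2,k) and
  threshold 1. On the step vector h^i the weighted sum is a prefix sum of these differences,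
  which telescopes to z(i,k) \<in> {0,1}, and the threshold reproduces that bit.\<close>

definition difference_weights :: "(nat \<Rightarrow> nat \<Rightarrow> int) \<Rightarrow> nat \<Rightarrow> nat \<Rightarrow> int" where
  "difference_weights z k j = (if j = 0 then z 0 k else z j k - z (j - 1) k)"

lemma sum_atMost_differences:
  fixes f :: "nat \<Rightarrow> 'a::ab_group_add"
  shows "(\<Sum>j\<le>i. if j = 0 then f 0 else f j - f (j - 1)) = f i"
  by (induction i) auto

lemma sum_mult_step_vec:
  fixes g :: "nat \<Rightarrow> int"
  assumes "i < s"
  shows "(\<Sum>j<s. g j * step_vec s i j) = (\<Sum>j\<le>i. g j)"
proof -
  have "(\<Sum>j<s. g j * step_vec s i j) = (\<Sum>j\<in>{..<s} \<inter> {j. j \<le> i}. g j)"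
    by (simp add: step_vec_def sum.inter_restrict if_distrib cong: if_cong)
  also have "{..<s} \<inter> {j. j \<le> i} = {..i}"
    using assms by auto
  finally show ?thesis .
qed

lemma threshold_net_difference_weights:
  assumes "i < s" and "z i k \<in> {0, 1}"
  shows "threshold_net s (difference_weights z) (\<lambda>_. 1) (step_vec s i) k = z i k"
proof -
  have "(\<Sum>j<s. difference_weights z k j * step_vec s i j) = z i k"
    using sum_mult_step_vec[OF \<open>i < s\<close>] sum_atMost_differences[of "\<lambda>j. z j k" i]
    by (simp add: difference_weights_def)
  with assms(2) show ?thesis
    by (auto simp: threshold_net_def)
qed

theorem lemma13:
  fixes s d :: nat and z :: "nat \<Rightarrow> nat \<Rightarrow> int"
  assumes "s \<ge> 1" "d \<ge> 1" "s \<le> 2 ^ d"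
    and "\<forall>i<s. \<forall>k<d. z i k \<in> {0, 1}"
    and "\<forall>i<s. \<forall>i'<s. i \<noteq> i' \<longrightarrow> (\<exists>k<d. z i k \<noteq> z i' k)"
  shows "\<exists>(W :: nat \<Rightarrow> nat \<Rightarrow> int) (theta :: nat \<Rightarrow> int).
           \<forall>i<s. \<forall>k<d. threshold_net s W theta (step_vec s i) k = z i k"
proof (intro exI allI impI)
  fix i k
  assume "i < s" and "k < d"
  with assms(4) show "threshold_net s (difference_weights z) (\<lambda>_. 1) (step_vec s i) k = z i k"
    by (intro threshold_net_difference_weights) auto
qed

end
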